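(* Let $p$ be a prime and let $\lambda$ be an element of order $k\geq 3$ in the multiplicative group $\mathbb{F}_p^*$. Then $$\rho(\lambda,p)\geq p^{1/\phi(k)}/\sqrt{8},$$ where $\phi$ is Euler's totient function.
   Context: For $\mathbf{h}=(h_1,h_2)\in\mathbb{Z}^2$ let $r(\mathbf{h})=\max\{1,|h_1|\}\cdot\max\{1,|h_2|\}$. For $\lambda\in\{1,\dots,p-1\}$ define $\rho(\lambda,p)=\min r(\mathbf{h})$, the minimum taken over all nonzero $\mathbf{h}=(h_1,h_2)\in\mathbb{Z}^2$ satisfying $h_1+h_2\lambda\equiv 0\pmod p$ (here $\lambda$ is identified with an integer representative). *)

theory Defs
  imports "HOL-Number_Theory.Number_Theory"
begin

definition r_weight :: "int \<times> int \<Rightarrow> nat" where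
  "r_weight h = max 1 (nat \<bar>fst h\<bar>) * max 1 (nat \<bar>snd h\<bar>)"

definition rho :: "int \<Rightarrow> int \<Rightarrow> nat" where
  "rho lam p = (LEAST n. \<exists>h::int \<times> int. h \<noteq> (0, 0) \<and>
       [fst h + snd h * lam = 0] (mod p) \<and> n = r_weight h)"

end

theory Submission
  imports Defs "HOL-Computational_Algebra.Fundamental_Theorem_Algebra"
begin

text \<open>Take a nonzero \<open>h\<close> attaining \<open>\<rho>(\<lambda>, p)\<close>. If \<open>h\<^sub>2 = 0\<close>, then \<open>p\<close> divides \<open>h\<^sub>1\<close>.
  Otherwise \<open>a = -h\<^sub>1\<close> and \<open>b = h\<^sub>2\<close> satisfy \<open>a \<equiv> \<lambda> b (mod p)\<close>, and \<open>\<lambda>\<close> is a root of the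
  cyclotomic polynomial \<open>\<Phi>\<^sub>k\<close> modulo \<open>p\<close>, so \<open>p\<close> divides the integer
  \<open>b\<^bsup>\<phi>(k)\<^esup> \<Phi>\<^sub>k(a/b) = \<Prod>\<^sub>\<zeta> (a - b\<zeta>)\<close>, the product over the primitive \<open>k\<close>-th roots of unity.
  As \<open>k \<ge> 3\<close>, no \<open>\<zeta>\<close> is real, so this integer is nonzero; each factor has modulus at most
  \<open>|a| + |b| \<le> 2 r(h)\<close>. Hence \<open>p \<le> (2 r(h))\<^bsup>\<phi>(k)\<^esup>\<close>, which is stronger than the claim.\<close>

definition primitive_roots_unity :: "nat \<Rightarrow> complex set" where
  "primitive_roots_unity d = {z. z ^ d = 1 \<and> (\<forall>m. 0 < m \<and> m < d \<longrightarrow> z ^ m \<noteq> 1)}"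

lemma finite_primitive_roots_unity: "d > 0 \<Longrightarrow> finite (primitive_roots_unity d)"
  by (rule finite_subset[OF _ finite_roots_unity[of d]]) (auto simp: primitive_roots_unity_def)

lemma roots_unity_eq_UN_primitive:
  assumes "n > 0"
  shows "{z::complex. z ^ n = 1} = (\<Union>d\<in>{d. d dvd n}. primitive_roots_unity d)"
proof safe
  fix z :: complex assume z: "z ^ n = 1"
  define d where "d = (LEAST m. 0 < m \<and> z ^ m = 1)"
  have d: "0 < d" "z ^ d = 1"
    using LeastI[of "\<lambda>m. 0 < m \<and> z ^ m = 1" n] assms z unfolding d_def by auto
  have d_least: "z ^ m \<noteq> 1" if "0 < m" "m < d" for m
    using not_less_Least[of m "\<lambda>m. 0 < m \<and> z ^ m = 1"] that unfolding d_def by blast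
  have "z ^ (n mod d) = 1"
    using z d(2) by (metis mult_div_mod_eq power_add power_mult power_one mult_1)
  then have "d dvd n"
    using d_least[of "n mod d"] d(1) by (auto simp: mod_eq_0_iff_dvd)
  moreover have "z \<in> primitive_roots_unity d"
    using d d_least by (auto simp: primitive_roots_unity_def)
  ultimately show "z \<in> (\<Union>d\<in>{d. d dvd n}. primitive_roots_unity d)" by blast
next
  fix z :: complex and d assume "d dvd n" "z \<in> primitive_roots_unity d"
  then show "z ^ n = 1" by (auto simp: primitive_roots_unity_def power_mult elim!: dvdE)
qed

lemma primitive_roots_unity_disjoint:
  assumes "d1 > 0" "d2 > 0" "d1 \<noteq> d2"
  shows "primitive_roots_unity d1 \<inter> primitive_roots_unity d2 = {}"
  using assms by (cases d1 d2 rule: linorder_cases) (auto simp: primitive_roots_unity_def)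

lemma card_primitive_roots_unity: "n > 0 \<Longrightarrow> card (primitive_roots_unity n) = totient n"
proof (induction n rule: less_induct)
  case (less n)
  have divisors: "{d. d dvd n} = insert n {d. d dvd n \<and> d < n}"
    using less.prems by (auto dest: dvd_imp_le)
  have "(\<Sum>d | d dvd n. card (primitive_roots_unity d)) = card {z::complex. z ^ n = 1}"
    unfolding roots_unity_eq_UN_primitive[OF less.prems]
    by (subst card_UN_disjoint;
        (intro ballI impI primitive_roots_unity_disjoint finite_primitive_roots_unity)?)
       (use less.prems in \<open>auto intro: dvd_pos_nat\<close>)
  also have "\<dots> = (\<Sum>d | d dvd n. totient d)"
    using less.prems by (simp add: card_roots_unity_eq totient_divisor_sum)
  finally have "(\<Sum>d | d dvd n. card (primitive_roots_unity d)) = (\<Sum>d | d dvd n. totient d)" .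
  moreover have "(\<Sum>d | d dvd n \<and> d < n. card (primitive_roots_unity d))
      = (\<Sum>d | d dvd n \<and> d < n. totient d)"
    by (intro sum.cong refl less.IH) (auto intro: dvd_pos_nat[OF less.prems])
  ultimately show ?case by (simp add: divisors)
qed

lemma norm_primitive_root_unity:
  assumes "k > 0" "z \<in> primitive_roots_unity k"
  shows "norm z = 1"
proof -
  have "norm z ^ k = 1 ^ k" using assms(2) by (simp add: primitive_roots_unity_def flip: norm_power)
  then show ?thesis using assms(1) by (subst (asm) power_eq_iff_eq_base) auto
qed

lemma Im_primitive_root_unity_neq_0:
  assumes "k \<ge> 3" "z \<in> primitive_roots_unity k"
  shows "Im z \<noteq> 0"
proof
  assume "Im z = 0"
  then have z: "z = complex_of_real (Re z)" by (simp add: complex_eq_iff)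
  have "norm z = 1" using assms by (intro norm_primitive_root_unity) auto
  then have "Re z ^ 2 = 1" using z by (metis norm_of_real abs_power2 one_power2 power2_abs)
  then have "z ^ 2 = 1" using z by (metis of_real_1 of_real_power)
  then show False using assms by (auto simp: primitive_roots_unity_def)
qed

definition cyclotomic :: "nat \<Rightarrow> complex poly" where
  "cyclotomic d = (\<Prod>z\<in>primitive_roots_unity d. [:-z, 1:])"

lemma lead_coeff_cyclotomic: "lead_coeff (cyclotomic n) = 1"
  unfolding cyclotomic_def lead_coeff_prod by simp

lemma degree_cyclotomic: "n > 0 \<Longrightarrow> degree (cyclotomic n) = totient n"
  unfolding cyclotomic_def
  by (subst degree_prod_sum_eq) (auto simp: finite_primitive_roots_unity card_primitive_roots_unity)

lemma lead_coeff_monom_minus_one: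
  assumes "n > 0"
  shows "lead_coeff (monom (1::'a::comm_ring_1) n - 1) = 1"
proof -
  have "degree (monom (1::'a) n - 1) = n"
    using assms by (intro order.antisym degree_diff_le le_degree) (auto simp: degree_monom_eq)
  then show ?thesis using assms by simp
qed

lemma rsquarefree_monom_minus_one:
  assumes "n > 0"
  shows "rsquarefree (monom (1::'a::field_char_0) n - 1)"
  unfolding rsquarefree_roots
proof (intro allI notI)
  fix a :: 'a
  assume "poly (monom 1 n - 1) a = 0 \<and> poly (pderiv (monom 1 n - 1)) a = 0"
  then have "a ^ n = 1" "of_nat n * a ^ (n - 1) = 0"
    by (simp_all add: poly_monom pderiv_diff pderiv_monom)
  then show False using assms by (simp add: power_0_left)
qed

lemma monom_minus_one_eq_prod_cyclotomic:
  assumes "n > 0"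
  shows "monom 1 n - 1 = (\<Prod>d | d dvd n. cyclotomic d)"
proof -
  have "monom 1 n - 1 = smult (lead_coeff (monom (1::complex) n - 1))
      (\<Prod>z | poly (monom 1 n - 1) z = 0. [:-z, 1:])"
    using complex_poly_decompose_rsquarefree[OF rsquarefree_monom_minus_one[OF assms]] by simp
  also have "\<dots> = (\<Prod>z | poly (monom 1 n - 1) z = 0. [:-z, 1:])"
    by (simp only: lead_coeff_monom_minus_one[OF assms] smult_1_left)
  also have "{z. poly (monom 1 n - 1) z = 0} = (\<Union>d\<in>{d. d dvd n}. primitive_roots_unity d)"
    by (simp add: poly_monom flip: roots_unity_eq_UN_primitive[OF assms])
  also have "(\<Prod>z\<in>\<dots>. [:-z, 1:]) = (\<Prod>d | d dvd n. cyclotomic d)"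
    unfolding cyclotomic_def
    by (rule prod.UNION_disjoint;
        (intro ballI impI primitive_roots_unity_disjoint finite_primitive_roots_unity)?)
       (use assms in \<open>auto intro: dvd_pos_nat\<close>)
  finally show ?thesis .
qed

definition int_coeffs :: "'a::ring_1 poly \<Rightarrow> bool" where
  "int_coeffs f \<longleftrightarrow> (\<forall>i. coeff f i \<in> \<int>)"

lemma int_coeffs_add: "int_coeffs f \<Longrightarrow> int_coeffs g \<Longrightarrow> int_coeffs (f + g)"
  unfolding int_coeffs_def by (auto intro!: Ints_add)

lemma int_coeffs_diff: "int_coeffs f \<Longrightarrow> int_coeffs g \<Longrightarrow> int_coeffs (f - g)"
  unfolding int_coeffs_def by (auto intro!: Ints_diff)

lemma int_coeffs_mult: "int_coeffs f \<Longrightarrow> int_coeffs g \<Longrightarrow> int_coeffs (f * g)"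
  unfolding int_coeffs_def coeff_mult by (auto intro!: Ints_sum Ints_mult)

lemma int_coeffs_monom: "c \<in> \<int> \<Longrightarrow> int_coeffs (monom c n)"
  unfolding int_coeffs_def by auto

lemma int_coeffs_prod: "(\<And>x. x \<in> A \<Longrightarrow> int_coeffs (f x)) \<Longrightarrow> int_coeffs (prod f A)"
proof (induction A rule: infinite_finite_induct)
  case (insert x F)
  then show ?case by (simp add: int_coeffs_mult)
qed (auto simp: int_coeffs_def coeff_1)

lemma int_coeffs_monic_factor:
  fixes g q :: "'a::idom poly"
  assumes g: "int_coeffs g" "lead_coeff g = 1" and gq: "int_coeffs (g * q)"
  shows "int_coeffs q"
  using gq
proof (induction "degree q" arbitrary: q rule: less_induct)
  case less
  define c where "c = lead_coeff q"
  define q' where "q' = q - monom c (degree q)"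
  have c: "c \<in> \<int>"
    using less.prems g(2) unfolding int_coeffs_def c_def by (metis lead_coeff_mult mult_1)
  have "int_coeffs (g * q')"
    unfolding q'_def right_diff_distrib
    by (intro int_coeffs_diff int_coeffs_mult less.prems g(1) int_coeffs_monom c)
  moreover have "q' = 0 \<or> degree q' < degree q"
  proof (cases "degree q = 0")
    case True
    then show ?thesis by (auto simp: q'_def c_def monom_0 elim: degree_eq_zeroE)
  next
    case False
    have "degree q' \<le> degree q"
      unfolding q'_def by (rule order.trans[OF degree_diff_le_max]) (simp add: degree_monom_le)
    moreover have "coeff q' (degree q) = 0" by (simp add: q'_def c_def)
    ultimately show ?thesis
      using False by (metis le_neq_implies_less leading_coeff_0_iff)
  qed
  ultimately have "int_coeffs q'"
    using less.hyps by (auto simp: int_coeffs_def)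
  then show ?case
    using int_coeffs_add[OF _ int_coeffs_monom[OF c]] unfolding q'_def by (metis diff_add_cancel)
qed

lemma int_coeffs_cyclotomic: "n > 0 \<Longrightarrow> int_coeffs (cyclotomic n)"
proof (induction n rule: less_induct)
  case (less n)
  define P where "P = (\<Prod>d | d dvd n \<and> d < n. cyclotomic d)"
  have "{d. d dvd n} = insert n {d. d dvd n \<and> d < n}"
    using less.prems by (auto dest: dvd_imp_le)
  then have "P * cyclotomic n = monom 1 n - 1"
    by (simp add: monom_minus_one_eq_prod_cyclotomic[OF less.prems] P_def mult.commute)
  moreover have "int_coeffs P"
    unfolding P_def by (intro int_coeffs_prod less.IH) (auto intro: dvd_pos_nat[OF less.prems])
  moreover have "lead_coeff P = 1"
    unfolding P_def lead_coeff_prod by (simp add: lead_coeff_cyclotomic)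
  moreover have "int_coeffs (monom 1 n - 1 :: complex poly)"
    by (intro int_coeffs_diff int_coeffs_monom) (auto simp: int_coeffs_def coeff_1)
  ultimately show ?case
    using int_coeffs_monic_factor by metis
qed

definition int_cyclotomic :: "nat \<Rightarrow> int poly" where
  "int_cyclotomic n = (SOME q. cyclotomic n = map_poly of_int q)"

lemma map_poly_of_int_int_cyclotomic:
  assumes "n > 0"
  shows "map_poly of_int (int_cyclotomic n) = cyclotomic n"
proof -
  obtain q where "cyclotomic n = map_poly of_int q"
    using intpolyE[of "cyclotomic n"] int_coeffs_cyclotomic[OF assms]
    unfolding int_coeffs_def by blast
  then show ?thesis
    unfolding int_cyclotomic_def by (metis (mono_tags) someI)
qed

lemma degree_int_cyclotomic: "n > 0 \<Longrightarrow> degree (int_cyclotomic n) = totient n"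
  using degree_map_poly[of "of_int :: int \<Rightarrow> complex" "int_cyclotomic n"]
  by (simp add: map_poly_of_int_int_cyclotomic degree_cyclotomic)

lemma poly_map_poly_of_int:
  "poly (map_poly of_int q) (of_int x) = (of_int (poly q x) :: 'a::comm_ring_1)"
  by (induction q) (simp_all add: map_poly_pCons)

lemma poly_cyclotomic_of_int:
  "n > 0 \<Longrightarrow> poly (cyclotomic n) (of_int x) = of_int (poly (int_cyclotomic n) x)"
  by (metis map_poly_of_int_int_cyclotomic poly_map_poly_of_int)

lemma pow_minus_one_eq_prod_int_cyclotomic:
  fixes x :: int
  assumes "n > 0"
  shows "x ^ n - 1 = (\<Prod>d | d dvd n. poly (int_cyclotomic d) x)"
proof -
  have "complex_of_int (x ^ n - 1) = poly (monom 1 n - 1) (of_int x)"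
    by (simp add: poly_monom)
  also have "\<dots> = (\<Prod>d | d dvd n. poly (cyclotomic d) (of_int x))"
    by (simp add: monom_minus_one_eq_prod_cyclotomic[OF assms] poly_prod)
  also have "\<dots> = (\<Prod>d | d dvd n. of_int (poly (int_cyclotomic d) x))"
    using assms by (intro prod.cong refl poly_cyclotomic_of_int) (auto intro: dvd_pos_nat)
  also have "\<dots> = of_int (\<Prod>d | d dvd n. poly (int_cyclotomic d) x)"
    by simp
  finally show ?thesis
    by (simp only: of_int_eq_iff)
qed

lemma int_cyclotomic_dvd_pow_minus_one:
  "n > 0 \<Longrightarrow> poly (int_cyclotomic n) x dvd x ^ n - 1"
  by (subst pow_minus_one_eq_prod_int_cyclotomic) (auto intro: dvd_prodI)

lemma prime_dvd_int_cyclotomic_ord: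
  fixes p lam k :: nat
  assumes "prime p" "ord p lam = k" "k > 0"
  shows "int p dvd poly (int_cyclotomic k) (int lam)"
proof -
  have pow_eq_one_iff: "int p dvd int lam ^ d - 1 \<longleftrightarrow> [lam ^ d = 1] (mod p)" for d
    by (metis cong_iff_dvd_diff cong_int_iff of_nat_1 of_nat_power)
  have "int p dvd (\<Prod>d | d dvd k. poly (int_cyclotomic d) (int lam))"
    using ord[of lam p] assms(2,3)
    by (simp add: pow_eq_one_iff flip: pow_minus_one_eq_prod_int_cyclotomic)
  then obtain d where d: "d dvd k" "int p dvd poly (int_cyclotomic d) (int lam)"
    using assms(1,3) by (subst (asm) prime_dvd_prod_iff) auto
  have "d > 0" using d(1) assms(3) by (auto intro: dvd_pos_nat)
  have "\<not> d < k"
  proof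
    assume "d < k"
    have "int p dvd int lam ^ d - 1"
      using d(2) int_cyclotomic_dvd_pow_minus_one[OF \<open>d > 0\<close>] by (rule dvd_trans)
    then show False
      using ord_minimal[OF \<open>d > 0\<close>, of p lam] \<open>d < k\<close> assms(2) by (simp add: pow_eq_one_iff)
  qed
  then show ?thesis
    using d dvd_imp_le[OF d(1) assms(3)] by (metis le_neq_implies_less)
qed

definition poly_homog :: "'a::comm_semiring_1 poly \<Rightarrow> 'a \<Rightarrow> 'a \<Rightarrow> 'a" where
  "poly_homog f a b = (\<Sum>i\<le>degree f. coeff f i * a ^ i * b ^ (degree f - i))"

lemma poly_homog_scaled: "poly_homog f (c * b) b = b ^ degree f * poly f c"
  unfolding poly_homog_def poly_altdef sum_distrib_left
proof (intro sum.cong refl)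
  fix i assume "i \<in> {..degree f}"
  then have "b ^ degree f = b ^ i * b ^ (degree f - i)" by (simp flip: power_add)
  then show "coeff f i * (c * b) ^ i * b ^ (degree f - i) = b ^ degree f * (coeff f i * c ^ i)"
    by (simp add: power_mult_distrib ac_simps)
qed

lemma cong_poly_homog:
  fixes f :: "int poly"
  assumes "[a = a'] (mod m)"
  shows "[poly_homog f a b = poly_homog f a' b] (mod m)"
  unfolding poly_homog_def by (intro cong_sum cong_mult cong_pow cong_refl assms)

lemma poly_homog_map_poly_of_int:
  "poly_homog (map_poly of_int f) (of_int a) (of_int b)
    = (of_int (poly_homog f a b) :: 'a::{comm_ring_1, ring_char_0})"
  by (simp add: poly_homog_def degree_map_poly coeff_map_poly)

lemma poly_homog_linear_factors:
  fixes a b :: "'a::field"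
  assumes "finite Z" "b \<noteq> 0"
  shows "poly_homog (\<Prod>z\<in>Z. [:-z, 1:]) a b = (\<Prod>z\<in>Z. a - b * z)"
proof -
  have "poly_homog (\<Prod>z\<in>Z. [:-z, 1:]) a b = b ^ card Z * (\<Prod>z\<in>Z. a / b - z)"
    using poly_homog_scaled[of _ "a / b" b] assms by (simp add: degree_prod_sum_eq poly_prod)
  also have "\<dots> = (\<Prod>z\<in>Z. b * (a / b - z))"
    by (simp add: prod.distrib)
  also have "\<dots> = (\<Prod>z\<in>Z. a - b * z)"
    using assms(2) by (intro prod.cong refl) (simp add: right_diff_distrib)
  finally show ?thesis .
qed

text \<open>The norm of \<open>a - b\<zeta>\<^sub>k\<close> from the \<open>k\<close>-th cyclotomic field, computed as an integer.\<close>
definition cyclotomic_norm :: "nat \<Rightarrow> int \<Rightarrow> int \<Rightarrow> int" where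
  "cyclotomic_norm k a b = poly_homog (int_cyclotomic k) a b"

lemma of_int_cyclotomic_norm:
  assumes "k > 0" "b \<noteq> 0"
  shows "complex_of_int (cyclotomic_norm k a b)
    = (\<Prod>z\<in>primitive_roots_unity k. of_int a - of_int b * z)"
proof -
  have "complex_of_int (cyclotomic_norm k a b) = poly_homog (cyclotomic k) (of_int a) (of_int b)"
    unfolding cyclotomic_norm_def
    by (metis poly_homog_map_poly_of_int map_poly_of_int_int_cyclotomic[OF assms(1)])
  also have "\<dots> = (\<Prod>z\<in>primitive_roots_unity k. of_int a - of_int b * z)"
    unfolding cyclotomic_def using assms
    by (intro poly_homog_linear_factors finite_primitive_roots_unity) auto
  finally show ?thesis .
qed

lemma cyclotomic_norm_neq_0:
  assumes "k \<ge> 3" "b \<noteq> 0"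
  shows "cyclotomic_norm k a b \<noteq> 0"
proof -
  have "of_int a - of_int b * z \<noteq> 0" if "z \<in> primitive_roots_unity k" for z
    using Im_primitive_root_unity_neq_0[OF assms(1) that] assms(2)
    by (auto dest: arg_cong[of _ _ Im])
  then have "complex_of_int (cyclotomic_norm k a b) \<noteq> 0"
    using assms by (simp add: of_int_cyclotomic_norm finite_primitive_roots_unity)
  then show ?thesis by simp
qed

lemma abs_cyclotomic_norm_le:
  assumes "k > 0" "b \<noteq> 0"
  shows "\<bar>cyclotomic_norm k a b\<bar> \<le> (\<bar>a\<bar> + \<bar>b\<bar>) ^ totient k"
proof -
  have "real_of_int \<bar>cyclotomic_norm k a b\<bar>
      = norm (complex_of_int (cyclotomic_norm k a b))"
    by (simp only: norm_of_int)
  also have "\<dots> = (\<Prod>z\<in>primitive_roots_unity k. norm (of_int a - of_int b * z))"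
    by (simp only: of_int_cyclotomic_norm[OF assms] prod_norm)
  also have "\<dots> \<le> (\<Prod>z\<in>primitive_roots_unity k. of_int (\<bar>a\<bar> + \<bar>b\<bar>))"
  proof (intro prod_mono conjI norm_ge_zero)
    fix z assume "z \<in> primitive_roots_unity k"
    then have "norm (complex_of_int b * z) = of_int \<bar>b\<bar>"
      using norm_primitive_root_unity[OF assms(1)] by (simp add: norm_mult)
    moreover have "norm (complex_of_int a) = of_int \<bar>a\<bar>"
      by (simp only: norm_of_int)
    ultimately show "norm (complex_of_int a - of_int b * z) \<le> of_int (\<bar>a\<bar> + \<bar>b\<bar>)"
      using norm_triangle_ineq4[of "complex_of_int a" "of_int b * z"] by simp
  qed
  also have "\<dots> = of_int ((\<bar>a\<bar> + \<bar>b\<bar>) ^ totient k)"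
    using assms(1) by (simp add: card_primitive_roots_unity)
  finally show ?thesis by (simp only: of_int_le_iff)
qed

lemma prime_dvd_cyclotomic_norm:
  fixes p lam k :: nat
  assumes "prime p" "ord p lam = k" "k > 0" "[a = int lam * b] (mod int p)"
  shows "int p dvd cyclotomic_norm k a b"
proof -
  have "[cyclotomic_norm k a b = b ^ totient k * poly (int_cyclotomic k) (int lam)] (mod int p)"
    using cong_poly_homog[OF assms(4), of "int_cyclotomic k" b]
    by (simp only: cyclotomic_norm_def poly_homog_scaled degree_int_cyclotomic[OF assms(3)])
  moreover have "int p dvd b ^ totient k * poly (int_cyclotomic k) (int lam)"
    using prime_dvd_int_cyclotomic_ord[OF assms(1-3)] by simp
  ultimately show ?thesis by (simp add: cong_dvd_iff)
qed

lemma rho_attained: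
  "\<exists>h. h \<noteq> (0, 0) \<and> [fst h + snd h * lam = 0] (mod p) \<and> rho lam p = r_weight h"
proof -
  let ?P = "\<lambda>n. \<exists>h::int \<times> int.
    h \<noteq> (0, 0) \<and> [fst h + snd h * lam = 0] (mod p) \<and> n = r_weight h"
  have "?P (r_weight (- lam, 1))"
    by (rule exI[of _ "(- lam, 1)"]) simp
  then have "?P (rho lam p)"
    unfolding rho_def by (rule LeastI)
  then show ?thesis by auto
qed

lemma sum_abs_le_two_r_weight: "\<bar>h1\<bar> + \<bar>h2\<bar> \<le> 2 * int (r_weight (h1, h2))"
proof -
  define A where "A = max 1 \<bar>h1\<bar>"
  define B where "B = max 1 \<bar>h2\<bar>"
  have "int (r_weight (h1, h2)) = A * B"
    by (simp add: r_weight_def A_def B_def of_nat_max)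
  moreover have "0 \<le> (A - 1) * (B - 1)"
    by (simp add: A_def B_def)
  moreover have "1 \<le> A * B"
    using mult_mono[of 1 A 1 B] by (simp add: A_def B_def)
  ultimately show ?thesis
    by (simp add: A_def B_def algebra_simps) linarith
qed

lemma prime_le_sum_abs_pow_totient:
  fixes p lam k :: nat and h1 h2 :: int
  assumes "prime p" "ord p lam = k" "k \<ge> 3"
    and "(h1, h2) \<noteq> (0, 0)" "[h1 + h2 * int lam = 0] (mod int p)"
  shows "int p \<le> (\<bar>h1\<bar> + \<bar>h2\<bar>) ^ totient k"
proof (cases "h2 = 0")
  case True
  then have "h1 \<noteq> 0" "int p dvd h1"
    using assms(4,5) by (auto simp: cong_0_iff)
  then have "\<bar>int p\<bar> \<le> \<bar>h1\<bar>"
    by (rule dvd_imp_le_int)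
  then have "int p \<le> \<bar>h1\<bar>"
    by simp
  also have "\<dots> \<le> \<bar>h1\<bar> ^ totient k"
    using \<open>int p \<le> \<bar>h1\<bar>\<close> prime_gt_0_nat[OF assms(1)] assms(3)
    by (intro self_le_power) auto
  finally show ?thesis using True by simp
next
  case False
  have "- h1 - int lam * h2 = - (h1 + h2 * int lam)"
    by simp
  then have "[- h1 = int lam * h2] (mod int p)"
    using assms(5) unfolding cong_iff_dvd_diff by (simp only: dvd_minus_iff diff_0_right)
  then have "int p dvd cyclotomic_norm k (- h1) h2"
    using assms(1-3) by (intro prime_dvd_cyclotomic_norm) auto
  then have "\<bar>int p\<bar> \<le> \<bar>cyclotomic_norm k (- h1) h2\<bar>"
    by (rule dvd_imp_le_int[OF cyclotomic_norm_neq_0[OF assms(3) False]])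
  then have "int p \<le> \<bar>cyclotomic_norm k (- h1) h2\<bar>"
    by simp
  also have "\<dots> \<le> (\<bar>h1\<bar> + \<bar>h2\<bar>) ^ totient k"
    using abs_cyclotomic_norm_le[of k h2 "- h1"] False assms(3) by simp
  finally show ?thesis .
qed

lemma powr_inverse_le_of_le_power:
  fixes x y :: real
  assumes "0 \<le> x" "0 \<le> y" "n > 0" "x \<le> y ^ n"
  shows "x powr (1 / n) \<le> y"
proof -
  have "x powr (1 / n) \<le> (y ^ n) powr (1 / n)"
    using assms by (intro powr_mono2) auto
  also have "\<dots> = y"
    using assms by (simp add: powr_realpow' [symmetric] powr_powr)
  finally show ?thesis .
qed

theorem lemma4p6:
  fixes p lam k :: nat
  assumes "prime p"
    and "1 \<le> lam" and "lam \<le> p - 1"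
    and "ord p lam = k"
    and "k \<ge> 3"
  shows "real (rho (int lam) (int p)) \<ge> real p powr (1 / real (totient k)) / sqrt 8"
proof -
  obtain h1 h2 where h: "(h1, h2) \<noteq> (0, 0)" "[h1 + h2 * int lam = 0] (mod int p)"
    and rho: "rho (int lam) (int p) = r_weight (h1, h2)"
    using rho_attained[of "int lam" "int p"] by auto
  define r where "r = real (r_weight (h1, h2))"
  have "int p \<le> (\<bar>h1\<bar> + \<bar>h2\<bar>) ^ totient k"
    by (rule prime_le_sum_abs_pow_totient[OF assms(1,4,5) h])
  also have "\<dots> \<le> (2 * int (r_weight (h1, h2))) ^ totient k"
    by (intro power_mono sum_abs_le_two_r_weight) simp
  finally have "real_of_int (int p) \<le> of_int ((2 * int (r_weight (h1, h2))) ^ totient k)"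
    by (simp only: of_int_le_iff)
  then have "real p \<le> (2 * r) ^ totient k"
    by (simp add: r_def)
  then have "real p powr (1 / real (totient k)) \<le> 2 * r"
    using assms(5) by (intro powr_inverse_le_of_le_power) (auto simp: r_def)
  also have "\<dots> \<le> sqrt 8 * r"
    using real_le_rsqrt[of 2 8] by (intro mult_right_mono) (auto simp: r_def)
  finally show ?thesis
    by (simp add: rho r_def divide_le_eq mult.commute)
qed

end
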